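(* Let $n \in \mathbb{N}$ and let $K \subset \mathbb{C}$ be compact. The mapping $\mathcal{Q}_n: (H^2)^* \rightarrow C(K)$ which takes a function $f$ to $Q_n(1/f)$ is continuous (with the $H^2$ norm topology on $(H^2)^*$ and the uniform topology on $C(K)$).
   Context: $H^2$ is the Hardy space on the unit disc with norm $\|\sum_k a_kz^k\|_{H^2}^2=\sum_k|a_k|^2$, and $(H^2)^*=H^2\setminus\{0\}$. For $f\in (H^2)^*$, the optimal polynomial approximant $Q_n(1/f)$ is the unique polynomial of degree at most $n$ minimizing $\|qf-1\|_{H^2}$ over all polynomials $q$ of degree at most $n$. $C(K)$ is the space of continuous functions on $K$ with the sup norm. *)

theory Defs
  imports "HOL-Analysis.Analysis" "HOL-Computational_Algebra.Polynomial"
begin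

text \<open>Elements of H^2 are represented by their Taylor coefficient sequences.\<close>

definition H2 :: "(nat \<Rightarrow> complex) set" where
  "H2 = {a. summable (\<lambda>k. (cmod (a k))^2)}"

definition H2_star :: "(nat \<Rightarrow> complex) set" where
  "H2_star = H2 - {(\<lambda>_. 0)}"

definition h2norm :: "(nat \<Rightarrow> complex) \<Rightarrow> real" where
  "h2norm a = sqrt (\<Sum>k. (cmod (a k))^2)"

definition poly_times_H2 :: "complex poly \<Rightarrow> (nat \<Rightarrow> complex) \<Rightarrow> (nat \<Rightarrow> complex)" where
  "poly_times_H2 q a = (\<lambda>k. \<Sum>j\<le>k. coeff q j * a (k - j))"

definition H2_one :: "nat \<Rightarrow> complex" where
  "H2_one = (\<lambda>k. if k = 0 then 1 else 0)"

text \<open>The optimal polynomial approximant Q_n(1/f): the unique polynomial of degree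
  at most n minimizing the H^2 norm of q f - 1.\<close>
definition opa :: "nat \<Rightarrow> (nat \<Rightarrow> complex) \<Rightarrow> complex poly" where
  "opa n f = (THE q. degree q \<le> n \<and>
      (\<forall>p. degree p \<le> n \<longrightarrow>
         h2norm (\<lambda>k. poly_times_H2 q f k - H2_one k) \<le> h2norm (\<lambda>k. poly_times_H2 p f k - H2_one k)))"

end

theory Submission
  imports Defs
begin

(* Q_n(1/f) f is the orthogonal projection of 1 onto the (n+1)-dimensional space of products q f
   with degree q <= n.  As f is not 0, the triangular system expressing the coefficients of q f
   through those of q and f inverts to sum_{j<=n} |q_j| <= C ||q f||.  By the parallelogram law,
   two polynomials whose residuals ||q f - 1|| both exceed the minimum m by at most t satisfy
   ||(q - q') f||^2 <= 8 m t + 4 t^2; this gives existence (a minimising sequence is Cauchy) and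
   uniqueness of the minimiser.  Replacing f by g changes the residual of a polynomial with
   bounded coefficients by O(||g - f||), so Q_n(1/g) is a near-minimiser for f and its
   coefficients lie within O(||g - f||^(1/2)) of those of Q_n(1/f); on the bounded set K this
   bounds |Q_n(1/g) - Q_n(1/f)| uniformly. *)

lemma H2_h2norm_le_if_L2_set_le:
  assumes "\<And>N. L2_set (\<lambda>k. cmod (a k)) {..<N} \<le> B"
  shows "a \<in> H2" "h2norm a \<le> B"
proof -
  have B: "0 \<le> B" using assms[of 0] by simp
  have partial: "(\<Sum>k<N. (cmod (a k))^2) \<le> B^2" for N
    using assms[of N] B by (simp add: L2_set_def real_sqrt_le_iff sqrt_le_D)
  then have "summable (\<lambda>k. (cmod (a k))^2)"
    by (intro summableI_nonneg_bounded) auto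
  then show "a \<in> H2" by (simp add: H2_def)
  have "(\<Sum>k. (cmod (a k))^2) \<le> B^2"
    using \<open>summable _\<close> partial by (intro suminf_le_const) auto
  then show "h2norm a \<le> B" unfolding h2norm_def using B real_le_lsqrt by blast
qed

lemma h2norm_power2: "a \<in> H2 \<Longrightarrow> (h2norm a)^2 = (\<Sum>k. (cmod (a k))^2)"
  unfolding H2_def h2norm_def by (simp add: suminf_nonneg)

lemma h2norm_nonneg: "a \<in> H2 \<Longrightarrow> 0 \<le> h2norm a"
  unfolding H2_def h2norm_def by (simp add: suminf_nonneg)

lemma L2_set_le_h2norm:
  assumes "a \<in> H2"
  shows "L2_set (\<lambda>k. cmod (a k)) {..<N} \<le> h2norm a"
  using assms unfolding H2_def h2norm_def L2_set_def
  by (intro real_sqrt_le_mono sum_le_suminf) auto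

lemma norm_le_h2norm: "a \<in> H2 \<Longrightarrow> cmod (a k) \<le> h2norm a"
  using member_le_L2_set[of "{..<Suc k}" k "\<lambda>k. cmod (a k)"] L2_set_le_h2norm[of a "Suc k"]
  by simp

lemma H2_add: "a \<in> H2 \<Longrightarrow> b \<in> H2 \<Longrightarrow> (\<lambda>k. a k + b k) \<in> H2"
  and h2norm_triangle: "a \<in> H2 \<Longrightarrow> b \<in> H2 \<Longrightarrow> h2norm (\<lambda>k. a k + b k) \<le> h2norm a + h2norm b"
proof -
  assume a: "a \<in> H2" and b: "b \<in> H2"
  have "L2_set (\<lambda>k. cmod (a k + b k)) {..<N} \<le> h2norm a + h2norm b" for N
  proof -
    have "L2_set (\<lambda>k. cmod (a k + b k)) {..<N} \<le> L2_set (\<lambda>k. cmod (a k) + cmod (b k)) {..<N}"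
      by (rule L2_set_mono) (auto simp: norm_triangle_ineq)
    also have "\<dots> \<le> L2_set (\<lambda>k. cmod (a k)) {..<N} + L2_set (\<lambda>k. cmod (b k)) {..<N}"
      by (rule L2_set_triangle_ineq)
    also have "\<dots> \<le> h2norm a + h2norm b"
      using a b by (intro add_mono L2_set_le_h2norm)
    finally show ?thesis .
  qed
  then show "(\<lambda>k. a k + b k) \<in> H2" "h2norm (\<lambda>k. a k + b k) \<le> h2norm a + h2norm b"
    by (rule H2_h2norm_le_if_L2_set_le)+
qed

lemma H2_cmult: "a \<in> H2 \<Longrightarrow> (\<lambda>k. c * a k) \<in> H2"
  and h2norm_cmult: "a \<in> H2 \<Longrightarrow> h2norm (\<lambda>k. c * a k) = cmod c * h2norm a"
proof -
  assume "a \<in> H2"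
  then have sum: "summable (\<lambda>k. (cmod (a k))^2)" by (simp add: H2_def)
  have sq: "(cmod (c * a k))^2 = (cmod c)^2 * (cmod (a k))^2" for k
    by (simp add: norm_mult power_mult_distrib)
  show "(\<lambda>k. c * a k) \<in> H2"
    using summable_mult[OF sum, of "(cmod c)^2"] by (simp add: H2_def sq)
  show "h2norm (\<lambda>k. c * a k) = cmod c * h2norm a"
    unfolding h2norm_def sq suminf_mult[OF sum] by (simp add: real_sqrt_mult)
qed

lemma H2_diff: "a \<in> H2 \<Longrightarrow> b \<in> H2 \<Longrightarrow> (\<lambda>k. a k - b k) \<in> H2"
  using H2_add[of a "\<lambda>k. -1 * b k"] H2_cmult[of b "-1"] by simp

lemma h2norm_minus_commute: "h2norm (\<lambda>k. a k - b k) = h2norm (\<lambda>k. b k - a k)"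
  unfolding h2norm_def by (simp add: norm_minus_commute)

lemma H2_one: "H2_one \<in> H2" and h2norm_one: "h2norm H2_one = 1"
proof -
  have "(\<lambda>k. (cmod (H2_one k))^2) = (\<lambda>k. if k = 0 then 1 else 0)"
    by (auto simp: H2_one_def)
  then have "(\<lambda>k. (cmod (H2_one k))^2) sums 1"
    using sums_single[of 0 "\<lambda>_. 1::real"] by simp
  then show "H2_one \<in> H2" "h2norm H2_one = 1"
    unfolding H2_def h2norm_def by (auto simp: sums_iff)
qed

lemma h2norm_parallelogram:
  assumes a: "a \<in> H2" and b: "b \<in> H2"
  shows "(h2norm (\<lambda>k. a k + b k))^2 + (h2norm (\<lambda>k. a k - b k))^2
         = 2 * (h2norm a)^2 + 2 * (h2norm b)^2"
proof -
  have pointwise: "(cmod (x + y))^2 + (cmod (x - y))^2 = 2 * (cmod x)^2 + 2 * (cmod y)^2"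
    for x y :: complex
    unfolding cmod_power2 by (simp add: power2_eq_square algebra_simps)
  have sums: "summable (\<lambda>k. (cmod (c k))^2)" if "c \<in> H2" for c
    using that by (simp add: H2_def)
  have "(h2norm (\<lambda>k. a k + b k))^2 + (h2norm (\<lambda>k. a k - b k))^2
      = (\<Sum>k. (cmod (a k + b k))^2 + (cmod (a k - b k))^2)"
    using a b by (simp add: h2norm_power2 H2_add H2_diff suminf_add sums)
  also have "\<dots> = (\<Sum>k. 2 * (cmod (a k))^2 + 2 * (cmod (b k))^2)"
    by (simp add: pointwise)
  also have "\<dots> = 2 * (h2norm a)^2 + 2 * (h2norm b)^2"
    using a b sums[OF a] sums[OF b]
    by (simp add: h2norm_power2 suminf_add[symmetric] suminf_mult summable_mult)
  finally show ?thesis .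
qed

definition H2_shift :: "nat \<Rightarrow> (nat \<Rightarrow> complex) \<Rightarrow> nat \<Rightarrow> complex" where
  "H2_shift j a = (\<lambda>k. if j \<le> k then a (k - j) else 0)"

lemma L2_set_H2_shift:
  "L2_set (\<lambda>k. cmod (H2_shift j a k)) {..<N} = L2_set (\<lambda>k. cmod (a k)) {..<N - j}"
proof -
  have "(\<Sum>k<N. (cmod (H2_shift j a k))^2) = (\<Sum>k<N - j. (cmod (a k))^2)"
  proof (induction N)
    case (Suc N)
    then show ?case
      by (cases "j \<le> N") (simp_all add: H2_shift_def Suc_diff_le)
  qed simp
  then show ?thesis by (simp add: L2_set_def power2_eq_square)
qed

lemma H2_shift: "a \<in> H2 \<Longrightarrow> H2_shift j a \<in> H2"
  and h2norm_shift_le: "a \<in> H2 \<Longrightarrow> h2norm (H2_shift j a) \<le> h2norm a"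
proof -
  assume "a \<in> H2"
  then have "L2_set (\<lambda>k. cmod (H2_shift j a k)) {..<N} \<le> h2norm a" for N
    by (simp add: L2_set_H2_shift L2_set_le_h2norm)
  then show "H2_shift j a \<in> H2" "h2norm (H2_shift j a) \<le> h2norm a"
    by (rule H2_h2norm_le_if_L2_set_le)+
qed

lemma H2_sum: "finite A \<Longrightarrow> (\<And>j. j \<in> A \<Longrightarrow> x j \<in> H2) \<Longrightarrow> (\<lambda>k. \<Sum>j\<in>A. c j * x j k) \<in> H2"
  and h2norm_sum_le: "finite A \<Longrightarrow> (\<And>j. j \<in> A \<Longrightarrow> x j \<in> H2) \<Longrightarrow>
    h2norm (\<lambda>k. \<Sum>j\<in>A. c j * x j k) \<le> (\<Sum>j\<in>A. cmod (c j) * h2norm (x j))"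
proof (induction A rule: finite_induct)
  case empty
  { case 1 show ?case by (simp add: H2_def) }
  { case 2 show ?case by (simp add: h2norm_def) }
next
  case (insert i A)
  { case 1 then show ?case using insert.hyps insert.IH(1) by (simp add: H2_add H2_cmult) }
  { case 2
    then have "h2norm (\<lambda>k. \<Sum>j\<in>insert i A. c j * x j k)
        \<le> h2norm (\<lambda>k. c i * x i k) + h2norm (\<lambda>k. \<Sum>j\<in>A. c j * x j k)"
      using insert.hyps insert.IH(1) by (simp add: h2norm_triangle H2_cmult)
    with 2 show ?case using insert.hyps insert.IH(2) by (simp add: h2norm_cmult) }
qed

definition coeff_l1_norm :: "nat \<Rightarrow> complex poly \<Rightarrow> real" where
  "coeff_l1_norm n p = (\<Sum>j\<le>n. cmod (coeff p j))"

lemma coeff_l1_norm_nonneg: "0 \<le> coeff_l1_norm n p"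
  by (simp add: coeff_l1_norm_def sum_nonneg)

lemma norm_coeff_le_coeff_l1_norm: "k \<le> n \<Longrightarrow> cmod (coeff p k) \<le> coeff_l1_norm n p"
  unfolding coeff_l1_norm_def by (rule member_le_sum) auto

lemma poly_times_H2_eq_sum_shift:
  assumes "degree p \<le> n"
  shows "poly_times_H2 p a = (\<lambda>k. \<Sum>j\<le>n. coeff p j * H2_shift j a k)"
proof
  fix k
  have "poly_times_H2 p a k = (\<Sum>j\<le>n + k. if j \<le> k then coeff p j * a (k - j) else 0)"
    unfolding poly_times_H2_def by (rule sum.mono_neutral_cong_left) auto
  also have "\<dots> = (\<Sum>j\<le>n. coeff p j * H2_shift j a k)"
    using assms by (intro sum.mono_neutral_cong_right) (auto simp: H2_shift_def coeff_eq_0)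
  finally show "poly_times_H2 p a k = (\<Sum>j\<le>n. coeff p j * H2_shift j a k)" .
qed

lemma H2_poly_times: "a \<in> H2 \<Longrightarrow> poly_times_H2 p a \<in> H2"
  by (simp add: poly_times_H2_eq_sum_shift[OF order.refl] H2_sum H2_shift)

lemma h2norm_poly_times_le:
  assumes "a \<in> H2" "degree p \<le> n"
  shows "h2norm (poly_times_H2 p a) \<le> coeff_l1_norm n p * h2norm a"
proof -
  have "h2norm (poly_times_H2 p a) \<le> (\<Sum>j\<le>n. cmod (coeff p j) * h2norm (H2_shift j a))"
    unfolding poly_times_H2_eq_sum_shift[OF assms(2)] using assms(1)
    by (intro h2norm_sum_le H2_shift) auto
  also have "\<dots> \<le> (\<Sum>j\<le>n. cmod (coeff p j) * h2norm a)"
    using assms(1) by (intro sum_mono mult_left_mono h2norm_shift_le) auto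
  finally show ?thesis by (simp add: coeff_l1_norm_def sum_distrib_right)
qed

lemma poly_times_H2_add:
  "poly_times_H2 (p + q) a = (\<lambda>k. poly_times_H2 p a k + poly_times_H2 q a k)"
  by (simp add: poly_times_H2_def sum.distrib algebra_simps)

lemma poly_times_H2_diff:
  "poly_times_H2 (p - q) a = (\<lambda>k. poly_times_H2 p a k - poly_times_H2 q a k)"
  by (simp add: poly_times_H2_def sum_subtractf algebra_simps)

lemma poly_times_H2_smult: "poly_times_H2 (smult c p) a = (\<lambda>k. c * poly_times_H2 p a k)"
  by (simp add: poly_times_H2_def sum_distrib_left algebra_simps)

lemma poly_times_H2_diff_right:
  "poly_times_H2 p (\<lambda>k. a k - b k) = (\<lambda>k. poly_times_H2 p a k - poly_times_H2 p b k)"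
  by (simp add: poly_times_H2_def sum_subtractf algebra_simps)

lemma poly_times_H2_0: "poly_times_H2 0 a = (\<lambda>k. 0)"
  by (simp add: poly_times_H2_def)

lemma poly_times_H2_shifted:
  assumes "\<And>i. i < m \<Longrightarrow> a i = 0"
  shows "poly_times_H2 p a (m + k) = coeff p k * a m + (\<Sum>j<k. coeff p j * a (m + k - j))"
proof -
  have "poly_times_H2 p a (m + k) = (\<Sum>j\<le>k. coeff p j * a (m + k - j))"
    unfolding poly_times_H2_def using assms
    by (intro sum.mono_neutral_right) (auto simp: not_le)
  also have "\<dots> = coeff p k * a m + (\<Sum>j<k. coeff p j * a (m + k - j))"
    by (simp add: lessThan_Suc_atMost[symmetric])
  finally show ?thesis .
qed

lemma norm_coeff_le_h2norm_poly_times: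
  assumes "a \<in> H2_star"
  obtains C where "C \<ge> 0" "\<And>p. cmod (coeff p k) \<le> C * h2norm (poly_times_H2 p a)"
proof -
  have a: "a \<in> H2" "\<exists>i. a i \<noteq> 0" using assms by (auto simp: H2_star_def)
  then obtain m where am: "a m \<noteq> 0" and below: "\<And>i. i < m \<Longrightarrow> a i = 0"
    using exists_least_iff[of "\<lambda>i. a i \<noteq> 0"] by blast
  have "\<exists>C\<ge>0. \<forall>p. cmod (coeff p k) \<le> C * h2norm (poly_times_H2 p a)"
  proof (induction k rule: less_induct)
    case (less k)
    then obtain D where D: "\<And>j. j < k \<Longrightarrow> D j \<ge> 0"
      "\<And>j p. j < k \<Longrightarrow> cmod (coeff p j) \<le> D j * h2norm (poly_times_H2 p a)"
      by metis
    define S where "S = (\<Sum>j<k. D j * cmod (a (m + k - j)))"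
    have "S \<ge> 0" unfolding S_def using D(1) by (auto intro!: sum_nonneg)
    have "cmod (coeff p k) \<le> (1 + S) / cmod (a m) * h2norm (poly_times_H2 p a)" for p
    proof -
      define h where "h = h2norm (poly_times_H2 p a)"
      have "cmod (coeff p k) * cmod (a m)
          = cmod (poly_times_H2 p a (m + k) - (\<Sum>j<k. coeff p j * a (m + k - j)))"
        by (simp add: poly_times_H2_shifted[OF below] norm_mult)
      also have "\<dots> \<le> h + (\<Sum>j<k. cmod (coeff p j) * cmod (a (m + k - j)))"
        unfolding h_def using a(1)
        by (intro order_trans[OF norm_triangle_ineq4] add_mono norm_le_h2norm H2_poly_times
              order_trans[OF norm_sum]) (simp_all add: norm_mult)
      also have "\<dots> \<le> h + (\<Sum>j<k. D j * h * cmod (a (m + k - j)))"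
        unfolding h_def using D(2) by (intro add_mono sum_mono mult_right_mono) auto
      also have "\<dots> = (1 + S) * h"
        unfolding S_def distrib_right sum_distrib_right by (simp add: mult_ac)
      finally show ?thesis
        using am by (simp add: h_def field_simps)
    qed
    with \<open>S \<ge> 0\<close> show ?case by (intro exI[of _ "(1 + S) / cmod (a m)"]) auto
  qed
  then show ?thesis using that by blast
qed

lemma coeff_l1_norm_le_h2norm_poly_times:
  assumes "a \<in> H2_star"
  obtains C where "C \<ge> 0" "\<And>p. coeff_l1_norm n p \<le> C * h2norm (poly_times_H2 p a)"
proof -
  have "\<forall>k. \<exists>C\<ge>0. \<forall>p. cmod (coeff p k) \<le> C * h2norm (poly_times_H2 p a)"
    by (metis norm_coeff_le_h2norm_poly_times[OF assms])
  then obtain D where D: "\<And>k. D k \<ge> 0" "\<And>k p. cmod (coeff p k) \<le> D k * h2norm (poly_times_H2 p a)"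
    by metis
  have "coeff_l1_norm n p \<le> (\<Sum>k\<le>n. D k) * h2norm (poly_times_H2 p a)" for p
    unfolding coeff_l1_norm_def sum_distrib_right by (intro sum_mono D(2))
  moreover have "(\<Sum>k\<le>n. D k) \<ge> 0" using D(1) by (intro sum_nonneg)
  ultimately show ?thesis using that by blast
qed

lemma poly_eq_0_if_h2norm_poly_times_eq_0:
  assumes "a \<in> H2_star" "h2norm (poly_times_H2 p a) = 0"
  shows "p = 0"
proof (rule poly_eqI)
  fix k
  obtain C where "\<And>p. cmod (coeff p k) \<le> C * h2norm (poly_times_H2 p a)"
    using norm_coeff_le_h2norm_poly_times[OF assms(1)] by blast
  then have "cmod (coeff p k) \<le> 0" using assms(2) by (metis mult_zero_right)
  then show "coeff p k = coeff 0 k" by simp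
qed

definition approx_error :: "(nat \<Rightarrow> complex) \<Rightarrow> complex poly \<Rightarrow> real" where
  "approx_error f q = h2norm (\<lambda>k. poly_times_H2 q f k - H2_one k)"

lemma H2_residual: "f \<in> H2 \<Longrightarrow> (\<lambda>k. poly_times_H2 q f k - H2_one k) \<in> H2"
  by (simp add: H2_diff H2_poly_times H2_one)

lemma approx_error_nonneg: "f \<in> H2 \<Longrightarrow> 0 \<le> approx_error f q"
  unfolding approx_error_def by (intro h2norm_nonneg H2_residual)

lemma approx_error_0: "approx_error f 0 = 1"
  using h2norm_cmult[OF H2_one, of "-1"] h2norm_one
  by (simp add: approx_error_def poly_times_H2_0)

lemma h2norm_poly_times_le_approx_error:
  assumes "f \<in> H2"
  shows "h2norm (poly_times_H2 p f) \<le> approx_error f p + 1"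
  using h2norm_triangle[OF H2_residual[OF assms, of p] H2_one] h2norm_one
  by (simp add: approx_error_def)

lemma approx_error_le_poly_diff:
  assumes "f \<in> H2"
  shows "approx_error f p \<le> approx_error f q + h2norm (poly_times_H2 (p - q) f)"
  using h2norm_triangle[OF H2_residual[OF assms, of q] H2_poly_times[OF assms, of "p - q"]]
  by (simp add: approx_error_def poly_times_H2_diff)

lemma approx_error_perturb:
  assumes f: "f \<in> H2" and g: "g \<in> H2" and p: "degree p \<le> n"
  shows "approx_error f p \<le> approx_error g p + coeff_l1_norm n p * h2norm (\<lambda>k. f k - g k)"
proof -
  have fg: "(\<lambda>k. f k - g k) \<in> H2" using f g by (rule H2_diff)
  have "approx_error f p \<le> approx_error g p + h2norm (poly_times_H2 p (\<lambda>k. f k - g k))"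
    using h2norm_triangle[OF H2_residual[OF g, of p] H2_poly_times[OF fg, of p]]
    by (simp add: approx_error_def poly_times_H2_diff_right)
  also have "\<dots> \<le> approx_error g p + coeff_l1_norm n p * h2norm (\<lambda>k. f k - g k)"
    using h2norm_poly_times_le[OF fg p] by simp
  finally show ?thesis .
qed

lemma h2norm_poly_times_perturb:
  assumes f: "f \<in> H2" and g: "g \<in> H2" and p: "degree p \<le> n"
  shows "h2norm (poly_times_H2 p f)
           \<le> h2norm (poly_times_H2 p g) + coeff_l1_norm n p * h2norm (\<lambda>k. f k - g k)"
proof -
  have fg: "(\<lambda>k. f k - g k) \<in> H2" using f g by (rule H2_diff)
  have "h2norm (poly_times_H2 p f)
          \<le> h2norm (poly_times_H2 p g) + h2norm (poly_times_H2 p (\<lambda>k. f k - g k))"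
    using h2norm_triangle[OF H2_poly_times[OF g, of p] H2_poly_times[OF fg, of p]]
    by (simp add: poly_times_H2_diff_right)
  also have "\<dots> \<le> h2norm (poly_times_H2 p g) + coeff_l1_norm n p * h2norm (\<lambda>k. f k - g k)"
    using h2norm_poly_times_le[OF fg p] by simp
  finally show ?thesis .
qed

lemma approx_error_near_minimizers_close:
  assumes f: "f \<in> H2" and p: "degree p \<le> n" and q: "degree q \<le> n"
    and min: "\<And>c. degree c \<le> n \<Longrightarrow> m \<le> approx_error f c" and "0 \<le> m"
    and p_near: "approx_error f p \<le> m + t" and q_near: "approx_error f q \<le> m + t"
  shows "(h2norm (poly_times_H2 (p - q) f))^2 \<le> 8 * m * t + 4 * t^2"
proof -
  define a where "a = (\<lambda>k. poly_times_H2 p f k - H2_one k)"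
  define b where "b = (\<lambda>k. poly_times_H2 q f k - H2_one k)"
  define c where "c = smult (1/2) (p + q)"
  have "degree c \<le> n"
    unfolding c_def by (rule order_trans[OF degree_smult_le degree_add_le[OF p q]])
  have "(\<lambda>k. a k + b k) = (\<lambda>k. 2 * (poly_times_H2 c f k - H2_one k))"
    by (simp add: a_def b_def c_def poly_times_H2_smult poly_times_H2_add algebra_simps)
  then have "h2norm (\<lambda>k. a k + b k) = 2 * approx_error f c"
    using h2norm_cmult[OF H2_residual[OF f], of 2 c] by (simp add: approx_error_def)
  then have "(2 * m)^2 \<le> (h2norm (\<lambda>k. a k + b k))^2"
    using min[OF \<open>degree c \<le> n\<close>] \<open>0 \<le> m\<close> by (intro power_mono) auto
  moreover have "(h2norm a)^2 \<le> (m + t)^2" "(h2norm b)^2 \<le> (m + t)^2"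
    using p_near q_near approx_error_nonneg[OF f]
    by (auto simp: a_def b_def approx_error_def intro!: power_mono)
  moreover have "(\<lambda>k. a k - b k) = poly_times_H2 (p - q) f"
    by (simp add: a_def b_def poly_times_H2_diff)
  ultimately show ?thesis
    using h2norm_parallelogram[of a b] H2_residual[OF f]
    by (simp add: a_def b_def power2_eq_square algebra_simps)
qed

lemma coeff_l1_norm_Cauchy_imp_convergent:
  assumes "\<And>e. 0 < e \<Longrightarrow> \<exists>N. \<forall>i\<ge>N. \<forall>j\<ge>N. coeff_l1_norm n (P i - P j) < e"
  obtains Q where "degree Q \<le> n" "(\<lambda>j. coeff_l1_norm n (Q - P j)) \<longlonglongrightarrow> 0"
proof -
  have "Cauchy (\<lambda>j. coeff (P j) k)" if "k \<le> n" for k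
  proof (rule metric_CauchyI)
    fix e :: real assume "0 < e"
    then obtain N where N: "\<And>i j. i \<ge> N \<Longrightarrow> j \<ge> N \<Longrightarrow> coeff_l1_norm n (P i - P j) < e"
      using assms by blast
    show "\<exists>N. \<forall>i\<ge>N. \<forall>j\<ge>N. dist (coeff (P i) k) (coeff (P j) k) < e"
    proof (intro exI allI impI)
      fix i j assume "i \<ge> N" "j \<ge> N"
      have "dist (coeff (P i) k) (coeff (P j) k) \<le> coeff_l1_norm n (P i - P j)"
        using norm_coeff_le_coeff_l1_norm[OF that, of "P i - P j"] by (simp add: dist_norm)
      also have "\<dots> < e" using N \<open>i \<ge> N\<close> \<open>j \<ge> N\<close> .
      finally show "dist (coeff (P i) k) (coeff (P j) k) < e" .
    qed
  qed
  then have lim: "(\<lambda>j. coeff (P j) k) \<longlonglongrightarrow> lim (\<lambda>j. coeff (P j) k)" if "k \<le> n" for k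
    using that by (simp add: Cauchy_convergent_iff convergent_LIMSEQ_iff)
  define Q where "Q = (\<Sum>k\<le>n. monom (lim (\<lambda>j. coeff (P j) k)) k)"
  have coeff_Q: "coeff Q k = lim (\<lambda>j. coeff (P j) k)" if "k \<le> n" for k
    using that by (simp add: Q_def coeff_sum coeff_monom)
  have "degree Q \<le> n"
    unfolding Q_def by (intro degree_sum_le) (auto intro: order_trans[OF degree_monom_le])
  moreover have "(\<lambda>j. coeff_l1_norm n (Q - P j)) \<longlonglongrightarrow> (\<Sum>k\<le>n. cmod (coeff Q k - coeff Q k))"
    unfolding coeff_l1_norm_def coeff_diff by (intro tendsto_intros) (simp add: coeff_Q lim)
  ultimately show ?thesis
    using that by simp
qed

lemma minimizing_sequence_coeff_l1_norm_Cauchy: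
  assumes f: "f \<in> H2_star" and deg: "\<And>j. degree (P j) \<le> n"
    and min: "\<And>c. degree c \<le> n \<Longrightarrow> m \<le> approx_error f c" and "0 \<le> m"
    and lim: "(\<lambda>j. approx_error f (P j)) \<longlonglongrightarrow> m"
    and "0 < e"
  shows "\<exists>N. \<forall>i\<ge>N. \<forall>j\<ge>N. coeff_l1_norm n (P i - P j) < e"
proof -
  have fH: "f \<in> H2" using f by (simp add: H2_star_def)
  obtain C where "C \<ge> 0" and C: "\<And>p. coeff_l1_norm n p \<le> C * h2norm (poly_times_H2 p f)"
    using coeff_l1_norm_le_h2norm_poly_times[OF f] by blast
  define A where "A = C^2 * (8 * m + 4)"
  define t where "t = min 1 (e^2 / (A + 1))"
  have "A \<ge> 0" using \<open>0 \<le> m\<close> by (simp add: A_def)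
  have "0 < t" "t \<le> 1" "A * t < e^2"
  proof -
    show "0 < t" "t \<le> 1" using \<open>0 < e\<close> \<open>A \<ge> 0\<close> by (auto simp: t_def)
    have "t \<le> e^2 / (A + 1)" by (simp add: t_def)
    then have "(A + 1) * t \<le> e^2" using \<open>A \<ge> 0\<close> by (simp add: pos_le_divide_eq mult.commute)
    then show "A * t < e^2" using \<open>0 < t\<close> by (simp add: distrib_right)
  qed
  obtain N where N: "\<And>j. j \<ge> N \<Longrightarrow> approx_error f (P j) \<le> m + t"
    using order_tendstoD(2)[OF lim, of "m + t"] \<open>0 < t\<close>
    unfolding eventually_sequentially by (meson less_add_same_cancel1 less_imp_le)
  have "coeff_l1_norm n (P i - P j) < e" if "i \<ge> N" "j \<ge> N" for i j
  proof -
    have "(h2norm (poly_times_H2 (P i - P j) f))^2 \<le> 8 * m * t + 4 * t^2"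
      using approx_error_near_minimizers_close[OF fH deg deg min \<open>0 \<le> m\<close> N N] that by blast
    also have "\<dots> \<le> (8 * m + 4) * t"
      using \<open>0 < t\<close> \<open>t \<le> 1\<close> by (simp add: power2_eq_square distrib_right)
    finally have "(C * h2norm (poly_times_H2 (P i - P j) f))^2 \<le> A * t"
      unfolding A_def power_mult_distrib mult.assoc by (rule mult_left_mono) simp
    moreover have "(coeff_l1_norm n (P i - P j))^2 \<le> (C * h2norm (poly_times_H2 (P i - P j) f))^2"
      using C[of "P i - P j"] coeff_l1_norm_nonneg by (rule power_mono)
    ultimately have "(coeff_l1_norm n (P i - P j))^2 < e^2"
      using \<open>A * t < e^2\<close> by linarith
    then show ?thesis using \<open>0 < e\<close> by (simp add: power_less_imp_less_base)
  qed
  then show ?thesis by blast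
qed

lemma approx_error_has_minimizer:
  assumes f: "f \<in> H2_star"
  obtains q where "degree q \<le> n" "\<And>p. degree p \<le> n \<Longrightarrow> approx_error f q \<le> approx_error f p"
proof -
  have fH: "f \<in> H2" using f by (simp add: H2_star_def)
  define S where "S = approx_error f ` {p. degree p \<le> n}"
  define m where "m = Inf S"
  have "approx_error f 0 \<in> S" by (auto simp: S_def)
  then have "S \<noteq> {}" by blast
  have "bdd_below S"
    using approx_error_nonneg[OF fH] by (auto simp: S_def bdd_below_def)
  then have min: "m \<le> approx_error f c" if "degree c \<le> n" for c
    using that by (auto simp: m_def S_def intro: cInf_lower)
  have "0 \<le> m"
    using \<open>S \<noteq> {}\<close> approx_error_nonneg[OF fH] by (auto simp: m_def S_def intro!: cInf_greatest)
  obtain x where "\<And>j. x j \<in> S" "x \<longlonglongrightarrow> m"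
    using closure_contains_Inf[OF \<open>S \<noteq> {}\<close> \<open>bdd_below S\<close>] by (auto simp: m_def closure_sequential)
  then have "\<forall>j. \<exists>p. degree p \<le> n \<and> x j = approx_error f p" by (auto simp: S_def image_iff)
  then obtain P where deg: "\<And>j. degree (P j) \<le> n" and "\<And>j. x j = approx_error f (P j)"
    by metis
  then have "x = (\<lambda>j. approx_error f (P j))" by auto
  with \<open>x \<longlonglongrightarrow> m\<close> have lim: "(\<lambda>j. approx_error f (P j)) \<longlonglongrightarrow> m" by simp
  obtain Q where "degree Q \<le> n" and Q: "(\<lambda>j. coeff_l1_norm n (Q - P j)) \<longlonglongrightarrow> 0"
    using coeff_l1_norm_Cauchy_imp_convergent
      [OF minimizing_sequence_coeff_l1_norm_Cauchy[OF f deg min \<open>0 \<le> m\<close> lim]] .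
  have "approx_error f Q \<le> approx_error f (P j) + coeff_l1_norm n (Q - P j) * h2norm f" for j
    using approx_error_le_poly_diff[OF fH, of Q "P j"]
      h2norm_poly_times_le[OF fH degree_diff_le[OF \<open>degree Q \<le> n\<close> deg[of j]]] by linarith
  moreover have "(\<lambda>j. approx_error f (P j) + coeff_l1_norm n (Q - P j) * h2norm f) \<longlonglongrightarrow> m + 0 * h2norm f"
    by (intro tendsto_intros lim Q)
  ultimately have "approx_error f Q \<le> m"
    by (intro LIMSEQ_le_const) auto
  then have "approx_error f Q \<le> approx_error f p" if "degree p \<le> n" for p
    using min[OF that] by linarith
  with \<open>degree Q \<le> n\<close> show ?thesis by (rule that)
qed

lemma opa_minimizes:
  assumes f: "f \<in> H2_star"
  shows "degree (opa n f) \<le> n"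
    and "degree p \<le> n \<Longrightarrow> approx_error f (opa n f) \<le> approx_error f p"
proof -
  have fH: "f \<in> H2" using f by (simp add: H2_star_def)
  define minimizer where "minimizer q \<longleftrightarrow> degree q \<le> n \<and>
      (\<forall>p. degree p \<le> n \<longrightarrow> approx_error f q \<le> approx_error f p)" for q
  have unique: "q1 = q2" if "minimizer q1" "minimizer q2" for q1 q2
  proof -
    have "degree q1 \<le> n" "degree q2 \<le> n" "approx_error f q1 = approx_error f q2"
      using that unfolding minimizer_def by (auto intro: order_antisym)
    then have "(h2norm (poly_times_H2 (q1 - q2) f))^2 \<le> 0"
      using approx_error_near_minimizers_close[OF fH, of q1 n q2 "approx_error f q1" 0]
        that approx_error_nonneg[OF fH] by (auto simp: minimizer_def)
    then have "q1 - q2 = 0" by (intro poly_eq_0_if_h2norm_poly_times_eq_0[OF f]) simp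
    then show ?thesis by simp
  qed
  obtain q where "minimizer q"
    using approx_error_has_minimizer[OF f] unfolding minimizer_def by blast
  with unique have "minimizer (THE q. minimizer q)" by (blast intro: theI)
  moreover have "opa n f = (THE q. minimizer q)"
    unfolding opa_def minimizer_def approx_error_def ..
  ultimately show "degree (opa n f) \<le> n"
    and "degree p \<le> n \<Longrightarrow> approx_error f (opa n f) \<le> approx_error f p"
    unfolding minimizer_def by auto
qed

lemma coeff_l1_norm_le_if_approx_error_le_1:
  assumes f: "f \<in> H2" and g: "g \<in> H2" and p: "degree p \<le> n" and "0 \<le> C"
    and C: "\<And>p. coeff_l1_norm n p \<le> C * h2norm (poly_times_H2 p f)"
    and close: "C * h2norm (\<lambda>k. g k - f k) \<le> 1/2"
    and err: "approx_error g p \<le> 1"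
  shows "coeff_l1_norm n p \<le> 4 * C"
proof -
  define L where "L = coeff_l1_norm n p"
  define d where "d = h2norm (\<lambda>k. g k - f k)"
  have "h2norm (poly_times_H2 p f) \<le> h2norm (poly_times_H2 p g) + L * d"
    using h2norm_poly_times_perturb[OF f g p] h2norm_minus_commute[of f g] by (simp add: L_def d_def)
  also have "\<dots> \<le> 2 + L * d"
    using h2norm_poly_times_le_approx_error[OF g, of p] err by simp
  finally have "C * h2norm (poly_times_H2 p f) \<le> C * (2 + L * d)"
    using \<open>0 \<le> C\<close> by (rule mult_left_mono)
  then have "L \<le> C * (2 + L * d)"
    using C[of p] unfolding L_def by linarith
  also have "\<dots> = 2 * C + (C * d) * L" by (simp add: algebra_simps)
  also have "\<dots> \<le> 2 * C + (1/2) * L"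
    using mult_right_mono[OF close coeff_l1_norm_nonneg[of n p]] by (simp add: L_def d_def)
  finally show ?thesis by (simp add: L_def)
qed

lemma approx_error_opa_perturbed_le:
  assumes f: "f \<in> H2_star" and g: "g \<in> H2_star" and "0 \<le> C"
    and C: "\<And>p. coeff_l1_norm n p \<le> C * h2norm (poly_times_H2 p f)"
    and close: "C * h2norm (\<lambda>k. g k - f k) \<le> 1/2"
  shows "approx_error f (opa n g) \<le> approx_error f (opa n f) + 8 * C * h2norm (\<lambda>k. g k - f k)"
proof -
  have fH: "f \<in> H2" and gH: "g \<in> H2" using f g by (auto simp: H2_star_def)
  define p where "p = opa n g"
  define q where "q = opa n f"
  define d where "d = h2norm (\<lambda>k. g k - f k)"
  have "degree p \<le> n" "degree q \<le> n"
    using opa_minimizes(1)[OF g] opa_minimizes(1)[OF f] by (simp_all add: p_def q_def)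
  have "approx_error g p \<le> 1" "approx_error f q \<le> 1"
    using opa_minimizes(2)[OF g, of 0] opa_minimizes(2)[OF f, of 0]
    by (simp_all add: p_def q_def approx_error_0)
  then have "coeff_l1_norm n p \<le> 4 * C" "coeff_l1_norm n q \<le> 4 * C"
    using coeff_l1_norm_le_if_approx_error_le_1[OF fH gH \<open>degree p \<le> n\<close> \<open>0 \<le> C\<close> C close]
      coeff_l1_norm_le_if_approx_error_le_1[OF fH fH \<open>degree q \<le> n\<close> \<open>0 \<le> C\<close> C]
    by (simp_all add: h2norm_def)
  then have "(coeff_l1_norm n p + coeff_l1_norm n q) * d \<le> (8 * C) * d"
    using h2norm_nonneg[OF H2_diff[OF gH fH]] by (intro mult_right_mono) (auto simp: d_def)
  moreover have "approx_error f p \<le> approx_error g p + coeff_l1_norm n p * d"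
    using approx_error_perturb[OF fH gH \<open>degree p \<le> n\<close>] h2norm_minus_commute[of f g]
    by (simp add: d_def)
  moreover have "approx_error g p \<le> approx_error g q"
    using opa_minimizes(2)[OF g \<open>degree q \<le> n\<close>] by (simp add: p_def)
  moreover have "approx_error g q \<le> approx_error f q + coeff_l1_norm n q * d"
    using approx_error_perturb[OF gH fH \<open>degree q \<le> n\<close>] by (simp add: d_def)
  ultimately show ?thesis
    by (simp add: p_def q_def d_def distrib_right)
qed

lemma coeff_l1_norm_opa_diff_le:
  assumes f: "f \<in> H2_star" and g: "g \<in> H2_star" and "0 \<le> C"
    and C: "\<And>p. coeff_l1_norm n p \<le> C * h2norm (poly_times_H2 p f)"
    and close: "C * h2norm (\<lambda>k. g k - f k) \<le> 1/2"
  shows "(coeff_l1_norm n (opa n g - opa n f))^2 \<le> 192 * C^3 * h2norm (\<lambda>k. g k - f k)"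
proof -
  have fH: "f \<in> H2" and gH: "g \<in> H2" using f g by (auto simp: H2_star_def)
  define p where "p = opa n g"
  define q where "q = opa n f"
  define d where "d = h2norm (\<lambda>k. g k - f k)"
  define m where "m = approx_error f q"
  have "degree p \<le> n" "degree q \<le> n"
    using opa_minimizes(1)[OF g] opa_minimizes(1)[OF f] by (simp_all add: p_def q_def)
  have min: "m \<le> approx_error f c" if "degree c \<le> n" for c
    using opa_minimizes(2)[OF f that] by (simp add: m_def q_def)
  have "0 \<le> m" "m \<le> 1" "0 \<le> d"
    using approx_error_nonneg[OF fH] min[of 0] h2norm_nonneg[OF H2_diff[OF gH fH]]
    by (simp_all add: m_def d_def approx_error_0)
  have "approx_error f p \<le> m + 8 * C * d" "approx_error f q \<le> m + 8 * C * d"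
    using approx_error_opa_perturbed_le[OF f g \<open>0 \<le> C\<close> C close] \<open>0 \<le> C\<close> \<open>0 \<le> d\<close>
    by (simp_all add: p_def q_def m_def d_def)
  then have "(h2norm (poly_times_H2 (p - q) f))^2 \<le> 8 * m * (8 * C * d) + 4 * (8 * C * d)^2"
    using approx_error_near_minimizers_close[OF fH \<open>degree p \<le> n\<close> \<open>degree q \<le> n\<close> min \<open>0 \<le> m\<close>]
    by blast
  also have "\<dots> = 64 * (m * (C * d)) + 256 * ((C * d) * (C * d))"
    by (simp add: power2_eq_square algebra_simps)
  also have "\<dots> \<le> 64 * (C * d) + 256 * ((1/2) * (C * d))"
    using \<open>0 \<le> m\<close> \<open>m \<le> 1\<close> \<open>0 \<le> C\<close> \<open>0 \<le> d\<close> close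
    by (intro add_mono mult_left_mono mult_left_le_one_le mult_right_mono) (simp_all add: d_def)
  finally have "(h2norm (poly_times_H2 (p - q) f))^2 \<le> 192 * (C * d)" by simp
  then have "(C * h2norm (poly_times_H2 (p - q) f))^2 \<le> C^2 * (192 * (C * d))"
    by (simp add: power_mult_distrib mult_left_mono)
  moreover have "(coeff_l1_norm n (p - q))^2 \<le> (C * h2norm (poly_times_H2 (p - q) f))^2"
    using C[of "p - q"] coeff_l1_norm_nonneg by (rule power_mono)
  ultimately show ?thesis
    by (simp add: p_def q_def d_def power2_eq_square power3_eq_cube algebra_simps)
qed

lemma norm_poly_le_coeff_l1_norm:
  assumes "degree r \<le> n" "cmod z \<le> R"
  shows "cmod (poly r z) \<le> max 1 R ^ n * coeff_l1_norm n r"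
proof -
  have "poly r z = (\<Sum>i\<le>n. coeff r i * z ^ i)"
    by (subst poly_as_sum_of_monoms'[OF assms(1), symmetric]) (simp add: poly_sum poly_monom)
  also have "cmod \<dots> \<le> (\<Sum>i\<le>n. cmod (coeff r i) * cmod z ^ i)"
    by (rule order_trans[OF norm_sum]) (simp add: norm_mult norm_power)
  also have "\<dots> \<le> (\<Sum>i\<le>n. cmod (coeff r i) * max 1 R ^ n)"
  proof (intro sum_mono mult_left_mono)
    fix i assume "i \<in> {..n}"
    have "cmod z ^ i \<le> max 1 R ^ i" using assms(2) by (intro power_mono) auto
    also have "\<dots> \<le> max 1 R ^ n" using \<open>i \<in> {..n}\<close> by (intro power_increasing) auto
    finally show "cmod z ^ i \<le> max 1 R ^ n" .
  qed simp
  also have "\<dots> = max 1 R ^ n * coeff_l1_norm n r"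
    by (simp add: coeff_l1_norm_def sum_distrib_left mult.commute)
  finally show ?thesis .
qed

lemma norm_poly_opa_diff_power2_le:
  assumes f: "f \<in> H2_star" and "bounded K"
  obtains C where "0 < C"
    "\<And>g z. g \<in> H2_star \<Longrightarrow> C * h2norm (\<lambda>k. g k - f k) \<le> 1 \<Longrightarrow> z \<in> K \<Longrightarrow>
       (cmod (poly (opa n g) z - poly (opa n f) z))^2 \<le> C * h2norm (\<lambda>k. g k - f k)"
proof -
  obtain C where "0 \<le> C" and C: "\<And>p. coeff_l1_norm n p \<le> C * h2norm (poly_times_H2 p f)"
    using coeff_l1_norm_le_h2norm_poly_times[OF f] by blast
  obtain R where R: "\<And>z. z \<in> K \<Longrightarrow> cmod z \<le> R"
    using \<open>bounded K\<close> unfolding bounded_iff by blast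
  define A where "A = (max 1 R ^ n)^2 * (192 * C^3)"
  have "0 \<le> A" using \<open>0 \<le> C\<close> by (simp add: A_def)
  have "(cmod (poly (opa n g) z - poly (opa n f) z))^2 \<le> (2 * C + A + 1) * h2norm (\<lambda>k. g k - f k)"
    if g: "g \<in> H2_star" and close: "(2 * C + A + 1) * h2norm (\<lambda>k. g k - f k) \<le> 1" and "z \<in> K"
    for g z
  proof -
    define d where "d = h2norm (\<lambda>k. g k - f k)"
    have "0 \<le> d" using f g by (auto simp: d_def H2_star_def intro: h2norm_nonneg H2_diff)
    moreover have "(2 * C + A + 1) * d \<le> 1" using close by (simp add: d_def)
    moreover have "(2 * C + A + 1) * d = 2 * (C * d) + A * d + d" by (simp add: algebra_simps)
    ultimately have "C * d \<le> 1/2" "A * d \<le> (2 * C + A + 1) * d"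
      using mult_nonneg_nonneg[OF \<open>0 \<le> A\<close> \<open>0 \<le> d\<close>] mult_nonneg_nonneg[OF \<open>0 \<le> C\<close> \<open>0 \<le> d\<close>]
      by linarith+
    have "degree (opa n g - opa n f) \<le> n"
      using opa_minimizes(1)[OF f] opa_minimizes(1)[OF g] by (intro degree_diff_le)
    from norm_poly_le_coeff_l1_norm[OF this R[OF \<open>z \<in> K\<close>]]
    have "(cmod (poly (opa n g) z - poly (opa n f) z))^2
            \<le> (max 1 R ^ n * coeff_l1_norm n (opa n g - opa n f))^2"
      by (intro power_mono) simp_all
    also have "\<dots> \<le> A * d"
      using coeff_l1_norm_opa_diff_le[OF f g \<open>0 \<le> C\<close> C \<open>C * d \<le> 1/2\<close>[unfolded d_def]]
      by (simp add: A_def d_def power_mult_distrib mult_left_mono mult.assoc)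
    also have "\<dots> \<le> (2 * C + A + 1) * d" by fact
    finally show ?thesis by (simp add: d_def)
  qed
  moreover have "0 < 2 * C + A + 1" using \<open>0 \<le> C\<close> \<open>0 \<le> A\<close> by simp
  ultimately show ?thesis using that by blast
qed

theorem proposition2p1:
  fixes n :: nat and K :: "complex set"
  assumes "compact K"
  shows "\<forall>f\<in>H2_star. \<forall>\<epsilon>>0. \<exists>\<delta>>0. \<forall>g\<in>H2_star.
           h2norm (\<lambda>k. g k - f k) < \<delta> \<longrightarrow>
           (\<forall>z\<in>K. cmod (poly (opa n g) z - poly (opa n f) z) < \<epsilon>)"
proof (intro ballI allI impI)
  fix f :: "nat \<Rightarrow> complex" and \<epsilon> :: real
  assume f: "f \<in> H2_star" and "0 < \<epsilon>"
  obtain C where "0 < C" and C: "\<And>g z. g \<in> H2_star \<Longrightarrow> C * h2norm (\<lambda>k. g k - f k) \<le> 1 \<Longrightarrow> z \<in> K \<Longrightarrow>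
      (cmod (poly (opa n g) z - poly (opa n f) z))^2 \<le> C * h2norm (\<lambda>k. g k - f k)"
    using norm_poly_opa_diff_power2_le[OF f compact_imp_bounded[OF assms]] by blast
  show "\<exists>\<delta>>0. \<forall>g\<in>H2_star. h2norm (\<lambda>k. g k - f k) < \<delta> \<longrightarrow>
          (\<forall>z\<in>K. cmod (poly (opa n g) z - poly (opa n f) z) < \<epsilon>)"
  proof (intro exI[of _ "min (1 / C) (\<epsilon>^2 / C)"] conjI ballI impI)
    show "0 < min (1 / C) (\<epsilon>^2 / C)" using \<open>0 < C\<close> \<open>0 < \<epsilon>\<close> by simp
    fix g z assume g: "g \<in> H2_star" and "z \<in> K"
      and "h2norm (\<lambda>k. g k - f k) < min (1 / C) (\<epsilon>^2 / C)"
    then have "C * h2norm (\<lambda>k. g k - f k) < 1" "C * h2norm (\<lambda>k. g k - f k) < \<epsilon>^2"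
      using \<open>0 < C\<close> by (simp_all add: pos_less_divide_eq mult.commute)
    then have "(cmod (poly (opa n g) z - poly (opa n f) z))^2 < \<epsilon>^2"
      using C[OF g _ \<open>z \<in> K\<close>] by fastforce
    then show "cmod (poly (opa n g) z - poly (opa n f) z) < \<epsilon>"
      by (rule power_less_imp_less_base) (use \<open>0 < \<epsilon>\<close> in simp)
  qed
qed

end
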